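(* With $N$, $v$, $e_\ell$ and $e$ as in the context, for every line $\ell$ of $\mathrm{PG}_2(q)$ we have $Ne_\ell=q^2v\,e$.
   Context: $q$ is a prime power, $G=\mathrm{PGL}_3(q)$ acts on the point set $\mathcal{P}$ of $\mathrm{PG}_2(q)$ (the $1$-dimensional subspaces of $\mathrm{GF}(q)^3$); lines are $2$-dimensional subspaces, viewed as sets of points. $V$ is the complex vector space with basis $\{e_{\alpha\beta}:(\alpha,\beta)\in\mathcal{P}^2\}$, and $N$ is the linear operator on $V$ with matrix entries $N_{(\alpha,\beta),(\gamma,\delta)}=|\{g\in G:\alpha^g=\beta,\ \gamma^g=\delta,\ g\text{ fixes no point of }\mathcal{P}\}|$. $v=(q-1)q(q^2-1)/3$. $e_\ell=\sum_{\beta,\beta'\in\ell}e_{\beta\beta'}$ and $e=\sum_{\beta,\beta'\in\mathcal{P},\ \beta\neq\beta'}e_{\beta\beta'}$. *)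

theory Defs
  imports "HOL-Analysis.Analysis"
begin

text \<open>Projective plane PG(2,q) over a finite field 'a (q = CARD('a)).
  Points: 1-dimensional subspaces of 'a^3, represented as sets of vectors.\<close>

definition pg_points :: "(('a::field) ^ 3) set set" where
  "pg_points = {vec.span {x} | x. x \<noteq> 0}"

definition pg_lines :: "(('a::field) ^ 3) set set set" where
  "pg_lines = {{p \<in> pg_points. p \<subseteq> W} | W. vec.subspace W \<and> vec.dim W = 2}"

definition pgl_class :: "'a::field ^ 3 ^ 3 \<Rightarrow> ('a ^ 3 ^ 3) set" where
  "pgl_class A = {(\<chi> i j. c * A $ i $ j) | c. c \<noteq> 0}"

definition PGL3 :: "('a::field ^ 3 ^ 3) set set" where
  "PGL3 = pgl_class ` {A. invertible A}"

text \<open>Action of a PGL element on a point (independent of the chosen representative).\<close>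
definition pgl_act :: "('a::field ^ 3 ^ 3) set \<Rightarrow> ('a ^ 3) set \<Rightarrow> ('a ^ 3) set" where
  "pgl_act g p = (\<Union>A\<in>g. (\<lambda>x. A *v x) ` p)"

definition fixed_point_free :: "('a::field ^ 3 ^ 3) set \<Rightarrow> bool" where
  "fixed_point_free g \<longleftrightarrow> (\<forall>p\<in>pg_points. pgl_act g p \<noteq> p)"

definition Nmat :: "('a::field ^ 3) set \<times> ('a ^ 3) set \<Rightarrow> ('a ^ 3) set \<times> ('a ^ 3) set \<Rightarrow> nat" where
  "Nmat ab cd = card {g \<in> PGL3. pgl_act g (fst ab) = snd ab \<and> pgl_act g (fst cd) = snd cd
                               \<and> fixed_point_free g}"

text \<open>Vectors of V are complex functions on P x P; N applied to w.\<close>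
definition Nop :: "((('a::field ^ 3) set \<times> ('a ^ 3) set) \<Rightarrow> complex)
                    \<Rightarrow> (('a ^ 3) set \<times> ('a ^ 3) set) \<Rightarrow> complex" where
  "Nop w ab = (\<Sum>cd\<in>pg_points \<times> pg_points. of_nat (Nmat ab cd) * w cd)"

definition e_line :: "('a::field ^ 3) set set \<Rightarrow> (('a ^ 3) set \<times> ('a ^ 3) set) \<Rightarrow> complex" where
  "e_line l ab = (if fst ab \<in> l \<and> snd ab \<in> l then 1 else 0)"

definition e_all :: "(('a::field ^ 3) set \<times> ('a ^ 3) set) \<Rightarrow> complex" where
  "e_all ab = (if fst ab \<in> pg_points \<and> snd ab \<in> pg_points \<and> fst ab \<noteq> snd ab then 1 else 0)"

end

theory Submission
  imports Defs
begin

text \<open>A fixed-point-free element \<open>g\<close> of \<open>PGL\<^sub>3(q)\<close> leaves no line invariant either,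
  since a linear map preserving a plane has an eigenvector. Hence every line \<open>l\<close> meets its
  preimage under \<open>g\<close> in exactly one point, and summing \<open>N\<close> over the entries
  \<open>(c, d) \<in> l \<times> l\<close> counts every fixed-point-free \<open>g\<close> with \<open>a\<^sup>g = b\<close> exactly once.
  There is no such \<open>g\<close> for \<open>a = b\<close>. For \<open>a \<noteq> b\<close> we may take \<open>a = \<langle>e\<^sub>1\<rangle>\<close> and
  \<open>b = \<langle>e\<^sub>2\<rangle>\<close>, and the representatives mapping \<open>e\<^sub>1\<close> to \<open>e\<^sub>2\<close> are the matrices with
  columns \<open>e\<^sub>2, u, w\<close>. Such a matrix has no eigenvector iff \<open>u\<^sub>3 \<noteq> 0\<close> and its characteristic
  polynomial has no root; for fixed \<open>u\<close> with \<open>u\<^sub>3 \<noteq> 0\<close> that polynomial runs once through all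
  monic cubics as \<open>w\<close> varies, and \<open>(q\<^sup>3 - q)/3\<close> monic cubics are rootless. This gives
  \<open>q\<^sup>2(q - 1)(q\<^sup>3 - q)/3 = q\<^sup>2 v\<close> elements.\<close>

subsection \<open>Linear algebra\<close>

lemma mat_mult_vector: "(mat c :: 'a::field^'n^'n) *v x = c *s x"
  by (simp add: vec_eq_iff matrix_vector_mult_def mat_def mult_delta_left)

lemma invertible_iff_ker_trivial:
  "invertible (A::'a::field^'n^'n) \<longleftrightarrow> (\<forall>x. A *v x = 0 \<longrightarrow> x = 0)"
  by (simp add: invertible_left_inverse matrix_left_invertible_ker)

lemma invertible_mult_vector_eq_0:
  "invertible (A::'a::field^'n^'n) \<Longrightarrow> A *v x = 0 \<longleftrightarrow> x = 0"
  using invertible_iff_ker_trivial by auto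

lemma span_singleton_scale:
  assumes "k \<noteq> 0"
  shows "vec.span {k *s x} = vec.span {x :: 'a::field^'n}"
proof -
  have "x = (1 / k) *s (k *s x)"
    using assms by simp
  also have "\<dots> \<in> vec.span {k *s x}"
    by (intro vec.span_scale vec.span_base) simp
  finally have "x \<in> vec.span {k *s x}" .
  moreover have "k *s x \<in> vec.span {x}"
    by (simp add: vec.span_base vec.span_scale)
  ultimately show ?thesis
    unfolding vec.span_eq by simp
qed

lemma span_singleton_eq_imp_scale:
  assumes "vec.span {x} = vec.span {y}"
  shows "\<exists>k. y = k *s (x::'a::field^'n)"
proof -
  have "y \<in> vec.span {x}"
    using assms by (simp add: vec.span_base)
  then show ?thesis
    unfolding vec.span_singleton by blast
qed

lemma columns_matrix_mult_vector:
  "transpose (vector [x, y, z]) *v (v::'a::field^3) = v$1 *s x + v$2 *s y + v$3 *s (z::'a^3)"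
  by (simp add: vec_eq_iff matrix_vector_mult_def sum_3 transpose_def algebra_simps)

lemma lincomb3_eq_0_imp:
  fixes x y z :: "'a::field^3"
  assumes x: "x \<noteq> 0" and y: "y \<notin> vec.span {x}" and z: "z \<notin> vec.span {x, y}"
    and lincomb: "a *s x + b *s y + c *s z = 0"
  shows "a = 0 \<and> b = 0 \<and> c = 0"
proof -
  have c: "c = 0"
  proof (rule ccontr)
    assume "c \<noteq> 0"
    then have "z = (1 / c) *s (c *s z)"
      by simp
    also have "c *s z = - (a *s x) - b *s y"
      using lincomb by (simp add: algebra_simps eq_neg_iff_add_eq_0)
    finally have "z = (- a / c) *s x + (- b / c) *s y"
      by (simp add: vec.scale_right_diff_distrib algebra_simps)
    moreover have "(- a / c) *s x + (- b / c) *s y \<in> vec.span {x, y}"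
      by (intro vec.span_add vec.span_scale) (auto intro: vec.span_base)
    ultimately show False
      using z by simp
  qed
  have b: "b = 0"
  proof (rule ccontr)
    assume "b \<noteq> 0"
    then have "y = (1 / b) *s (b *s y)"
      by simp
    also have "b *s y = - (a *s x)"
      using lincomb c by (simp add: algebra_simps eq_neg_iff_add_eq_0)
    finally have "y = (- a / b) *s x"
      by (simp add: algebra_simps)
    moreover have "(- a / b) *s x \<in> vec.span {x}"
      by (intro vec.span_scale vec.span_base) simp
    ultimately show False
      using y by simp
  qed
  then show ?thesis
    using lincomb c x by simp
qed

lemma obtain_invertible_mapping_e1_e2:
  fixes x y :: "'a::field^3"
  assumes x: "x \<noteq> 0" and y: "y \<notin> vec.span {x}"
  obtains P :: "'a^3^3" where "invertible P" "P *v vector [1, 0, 0] = x" "P *v vector [0, 1, 0] = y"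
proof -
  have "vec.dim (vec.span {x, y}) \<le> card {x, y}"
    by (rule vec.dim_le_card) (auto intro: vec.span_base)
  also have "\<dots> < vec.dim (UNIV :: ('a^3) set)"
    by (simp add: card_insert_if card_cart_basis)
  finally have "vec.span {x, y} \<noteq> UNIV"
    by (intro notI) (simp only: less_irrefl)
  then obtain z where z: "z \<notin> vec.span {x, y}"
    by blast
  define P :: "'a^3^3" where "P = transpose (vector [x, y, z])"
  have "invertible P"
    unfolding invertible_iff_ker_trivial
  proof (intro allI impI)
    fix v assume "P *v v = 0"
    then have "v$1 = 0 \<and> v$2 = 0 \<and> v$3 = 0"
      using lincomb3_eq_0_imp[OF x y z] unfolding P_def columns_matrix_mult_vector by blast
    then show "v = 0"
      by (simp add: vec_eq_iff forall_3)
  qed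
  moreover have "P *v vector [1, 0, 0] = x" "P *v vector [0, 1, 0] = y"
    unfolding P_def columns_matrix_mult_vector by simp_all
  ultimately show thesis
    by (rule that)
qed

definition eigenvector_free :: "'a::field^'n^'n \<Rightarrow> bool" where
  "eigenvector_free A \<longleftrightarrow> (\<forall>z \<mu>. z \<noteq> 0 \<longrightarrow> A *v z \<noteq> \<mu> *s z)"

lemma eigenvector_free_imp_invertible: "eigenvector_free A \<Longrightarrow> invertible A"
  unfolding eigenvector_free_def invertible_iff_ker_trivial by (metis vec.scale_zero_left)

lemma eigenvector_free_similar:
  assumes "eigenvector_free B" and PQ: "P ** Q = mat 1" "Q ** P = mat 1"
  shows "eigenvector_free (P ** B ** Q)"
  unfolding eigenvector_free_def
proof (intro allI impI notI)
  fix z \<mu> assume z: "z \<noteq> 0" and eig: "(P ** B ** Q) *v z = \<mu> *s z"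
  have "B *v (Q *v z) = Q *v ((P ** B ** Q) *v z)"
    by (simp add: matrix_vector_mul_assoc matrix_mul_assoc PQ(2) flip: matrix_mul_assoc[of Q P])
  also have "\<dots> = \<mu> *s (Q *v z)"
    using eig by (simp add: vector_scalar_commute)
  finally have "B *v (Q *v z) = \<mu> *s (Q *v z)" .
  moreover have "Q *v z \<noteq> 0"
  proof
    assume "Q *v z = 0"
    then have "(P ** Q) *v z = 0"
      by (simp flip: matrix_vector_mul_assoc)
    with z PQ(1) show False
      by simp
  qed
  ultimately show False
    using assms(1) unfolding eigenvector_free_def by blast
qed

text \<open>If \<open>A\<close> maps the hyperplane \<open>W\<close> into itself, pick \<open>v \<notin> W\<close> and \<open>\<mu>\<close> with
  \<open>A v - \<mu> v \<in> W\<close>; then \<open>A - \<mu>\<close> maps everything into \<open>W\<close>, so it is singular.\<close>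

lemma invariant_hyperplane_not_eigenvector_free:
  fixes A :: "'a::field^'n^'n"
  assumes W: "vec.subspace W" "vec.dim W + 1 = CARD('n)"
    and invariant: "\<And>z. z \<in> W \<Longrightarrow> A *v z \<in> W"
  shows "\<not> eigenvector_free A"
proof -
  have dim_UNIV: "vec.dim (UNIV :: ('a^'n) set) = CARD('n)"
    by (rule vec_dim_card)
  have "W \<noteq> UNIV"
    using W(2) dim_UNIV by auto
  then obtain v where v: "v \<notin> W"
    by blast
  have span_W: "vec.span W = W"
    using W(1) vec.span_eq_iff by blast
  have "vec.dim (insert v W) = CARD('n)"
    using v W by (simp add: vec.dim_insert span_W)
  then have "vec.span (insert v W) = vec.span UNIV"
    using dim_UNIV by (intro vec.dim_eq_span) (simp_all only: subset_UNIV order_refl)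
  then have decomp: "\<exists>k. y - k *s v \<in> W" for y
    using span_W by (auto simp: vec.span_insert)
  obtain \<mu> where \<mu>: "A *v v - \<mu> *s v \<in> W"
    using decomp by blast
  have into_W: "(A - mat \<mu>) *v y \<in> W" for y
  proof -
    obtain k where k: "y - k *s v \<in> W"
      using decomp by blast
    define w where "w = y - k *s v"
    have "(A - mat \<mu>) *v y = (A *v w - \<mu> *s w) + k *s (A *v v - \<mu> *s v)"
      by (simp add: w_def matrix_vector_mult_diff_rdistrib mat_mult_vector matrix_vector_right_distrib
          vector_scalar_commute matrix_vector_mult_diff_distrib vec.scale_right_diff_distrib algebra_simps)
    also have "\<dots> \<in> W"
      using W(1) invariant \<mu> k unfolding w_def[symmetric]
      by (meson vec.subspace_add vec.subspace_diff vec.subspace_scale)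
    finally show ?thesis .
  qed
  have "\<not> surj ((*v) (A - mat \<mu>))"
    using into_W v by (metis surjD)
  then obtain z where "z \<noteq> 0" "(A - mat \<mu>) *v z = 0"
    by (metis matrix_left_invertible_ker matrix_left_right_inverse matrix_right_invertible_surjective)
  then show ?thesis
    unfolding eigenvector_free_def by (auto simp: matrix_vector_mult_diff_rdistrib mat_mult_vector)
qed

lemma eigenvector_free_plane_inter_preimage:
  fixes A :: "'a::field^3^3"
  assumes W: "vec.subspace W" "vec.dim W = 2"
    and A: "invertible A" "eigenvector_free A"
  shows "\<exists>z. z \<noteq> 0 \<and> {x\<in>W. A *v x \<in> W} = vec.span {z}"
proof -
  define T where "T = {x. A *v x \<in> W}"
  obtain A' where A': "A ** A' = mat 1"
    using A(1) unfolding invertible_def by blast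
  have T: "vec.subspace T"
    unfolding T_def vec.subspace_def
    using W(1) by (auto simp: matrix_vector_right_distrib vector_scalar_commute
        vec.subspace_0 vec.subspace_add vec.subspace_scale)
  have "W \<subseteq> (*v) A ` T"
  proof
    fix w assume "w \<in> W"
    moreover have "A *v (A' *v w) = w"
      by (simp add: matrix_vector_mul_assoc A')
    ultimately show "w \<in> (*v) A ` T"
      unfolding T_def by (metis (mono_tags, lifting) image_eqI mem_Collect_eq)
  qed
  then have "vec.dim W \<le> vec.dim ((*v) A ` T)"
    by (rule vec.dim_subset)
  also have "\<dots> \<le> vec.dim T"
    by (rule vec.dim_image_le[OF matrix_vector_mul_linear_gen])
  finally have "2 \<le> vec.dim T"
    using W(2) by simp
  moreover have "vec.dim {x + y |x y. x \<in> W \<and> y \<in> T} \<le> 3"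
    using dim_subset_UNIV_cart_gen[where 'n=3] by simp
  ultimately have "1 \<le> vec.dim (W \<inter> T)"
    using vec.dim_sums_Int[OF W(1) T] W(2) by linarith
  moreover have WT: "vec.subspace (W \<inter> T)"
    using W(1) T by (rule vec.subspace_inter)
  moreover have "vec.dim (W \<inter> T) \<le> 1"
  proof (rule ccontr)
    assume "\<not> vec.dim (W \<inter> T) \<le> 1"
    then have "W \<inter> T = W"
      using vec.subspace_dim_equal[OF WT W(1)] W(2) by auto
    then show False
      using invariant_hyperplane_not_eigenvector_free[OF W(1)] W(2) A(2) unfolding T_def by auto
  qed
  ultimately obtain B where B: "B \<subseteq> W \<inter> T" "vec.independent B" "W \<inter> T \<subseteq> vec.span B" "card B = 1"
    using vec.basis_exists[of "W \<inter> T"] by (metis le_antisym)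
  then obtain z where z: "B = {z}"
    using card_1_singletonE by blast
  have "z \<noteq> 0"
    using B(2) z vec.dependent_zero by blast
  moreover have "vec.span {z} \<subseteq> W \<inter> T"
    using B(1) z WT by (metis vec.span_minimal)
  ultimately show ?thesis
    using B(3) z unfolding T_def by blast
qed

subsection \<open>Fixed-point-free elements of \<open>PGL\<^sub>3\<close>\<close>

lemma pg_points_iff: "p \<in> pg_points \<longleftrightarrow> (\<exists>x. x \<noteq> 0 \<and> p = vec.span {x})"
  unfolding pg_points_def by blast

lemma scale_matrix_mult_vector: "(\<chi> i j. c * (A::'a::field^'n^'m)$i$j) *v z = c *s (A *v z)"
  by (simp add: vec_eq_iff matrix_vector_mult_def sum_distrib_left algebra_simps)

lemma mem_pgl_class_self: "A \<in> pgl_class A"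
  unfolding pgl_class_def by (intro CollectI exI[of _ 1]) (simp add: vec_eq_iff)

lemma pgl_act_pgl_class: "pgl_act (pgl_class A) (vec.span {x}) = vec.span {(A::'a::field^3^3) *v x}"
proof (intro set_eqI iffI)
  fix v assume "v \<in> pgl_act (pgl_class A) (vec.span {x})"
  then obtain c k where "v = (\<chi> i j. c * A$i$j) *v (k *s x)"
    unfolding pgl_act_def pgl_class_def vec.span_singleton by blast
  then have "v = (c * k) *s (A *v x)"
    by (simp add: scale_matrix_mult_vector vector_scalar_commute)
  then show "v \<in> vec.span {A *v x}"
    unfolding vec.span_singleton by blast
next
  fix v assume "v \<in> vec.span {A *v x}"
  then obtain k where "v = A *v (k *s x)"
    unfolding vec.span_singleton by (auto simp: vector_scalar_commute)
  moreover have "k *s x \<in> vec.span {x}"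
    unfolding vec.span_singleton by blast
  ultimately show "v \<in> pgl_act (pgl_class A) (vec.span {x})"
    unfolding pgl_act_def using mem_pgl_class_self by blast
qed

lemma pgl_class_scale:
  assumes c: "(c::'a::field) \<noteq> 0"
  shows "pgl_class (\<chi> i j. c * (A::'a^3^3)$i$j) = pgl_class A"
  unfolding pgl_class_def
proof (intro set_eqI iffI)
  fix B assume "B \<in> {(\<chi> i j. d * (\<chi> i j. c * A$i$j)$i$j) |d. d \<noteq> 0}"
  then obtain d where "d \<noteq> 0" "B = (\<chi> i j. (d * c) * A$i$j)"
    by (auto simp: mult.assoc)
  then show "B \<in> {(\<chi> i j. d * A$i$j) |d. d \<noteq> 0}"
    using c by auto
next
  fix B assume "B \<in> {(\<chi> i j. d * A$i$j) |d. d \<noteq> 0}"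
  then obtain d where d: "d \<noteq> 0" "B = (\<chi> i j. d * A$i$j)"
    by auto
  then have "B = (\<chi> i j. (d / c) * (\<chi> i j. c * A$i$j)$i$j)"
    using c by (simp add: vec_eq_iff)
  moreover have "d / c \<noteq> 0"
    using c d by simp
  ultimately show "B \<in> {(\<chi> i j. d * (\<chi> i j. c * A$i$j)$i$j) |d. d \<noteq> 0}"
    by blast
qed

lemma pgl_class_eq_imp_scale:
  "pgl_class A = pgl_class B \<Longrightarrow> \<exists>c. c \<noteq> 0 \<and> B = (\<chi> i j. c * (A::'a::field^3^3)$i$j)"
  using mem_pgl_class_self[of B] unfolding pgl_class_def by auto

lemma fixed_point_free_pgl_class_iff:
  assumes "invertible A"
  shows "fixed_point_free (pgl_class A) \<longleftrightarrow> eigenvector_free A"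
proof
  assume fpf: "fixed_point_free (pgl_class A)"
  show "eigenvector_free A"
    unfolding eigenvector_free_def
  proof (intro allI impI notI)
    fix z \<mu> assume z: "z \<noteq> 0" and eig: "A *v z = \<mu> *s z"
    then have "\<mu> \<noteq> 0"
      using invertible_mult_vector_eq_0[OF assms] by fastforce
    then have "pgl_act (pgl_class A) (vec.span {z}) = vec.span {z}"
      by (simp add: pgl_act_pgl_class eig span_singleton_scale)
    then show False
      using fpf z pg_points_iff unfolding fixed_point_free_def by blast
  qed
next
  assume ef: "eigenvector_free A"
  show "fixed_point_free (pgl_class A)"
    unfolding fixed_point_free_def
  proof (intro ballI notI)
    fix p assume "p \<in> pg_points" and fixed: "pgl_act (pgl_class A) p = p"
    then obtain x where x: "x \<noteq> 0" "p = vec.span {x}"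
      using pg_points_iff by blast
    then have "vec.span {x} = vec.span {A *v x}"
      using fixed by (simp add: pgl_act_pgl_class)
    then obtain k where "A *v x = k *s x"
      using span_singleton_eq_imp_scale by blast
    then show False
      using ef x unfolding eigenvector_free_def by blast
  qed
qed

lemma card_fixed_point_free_mapping_eq_matrices:
  fixes x y :: "'a::{finite,field}^3"
  assumes x: "x \<noteq> 0" and y: "y \<noteq> 0"
  shows "card {g\<in>PGL3. pgl_act g (vec.span {x}) = vec.span {y} \<and> fixed_point_free g}
       = card {A. A *v x = y \<and> eigenvector_free A}"
proof -
  let ?S = "{g\<in>PGL3. pgl_act g (vec.span {x}) = vec.span {y} \<and> fixed_point_free g}"
  let ?M = "{A. A *v x = y \<and> eigenvector_free A}"
  have "inj_on pgl_class ?M"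
  proof (rule inj_onI)
    fix A B assume A: "A \<in> ?M" and B: "B \<in> ?M" and eq: "pgl_class A = pgl_class B"
    obtain c where c: "c \<noteq> 0" "B = (\<chi> i j. c * A$i$j)"
      using pgl_class_eq_imp_scale[OF eq] by blast
    have "c *s y = y"
      using A B c(2) by (simp add: scale_matrix_mult_vector)
    then have "(c - 1) *s y = 0"
      by (simp add: vec.scale_left_diff_distrib)
    then have "c = 1"
      using y by (metis right_minus_eq vec.scale_eq_0_iff)
    then show "A = B"
      using c(2) by (simp add: vec_eq_iff)
  qed
  moreover have "pgl_class ` ?M = ?S"
  proof (intro set_eqI iffI)
    fix g assume "g \<in> pgl_class ` ?M"
    then obtain A where A: "A *v x = y" "eigenvector_free A" "g = pgl_class A"
      by blast
    then show "g \<in> ?S"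
      using eigenvector_free_imp_invertible[OF A(2)]
      by (auto simp: PGL3_def pgl_act_pgl_class fixed_point_free_pgl_class_iff)
  next
    fix g assume g: "g \<in> ?S"
    then obtain A0 where A0: "invertible A0" "g = pgl_class A0"
      unfolding PGL3_def by blast
    then have "vec.span {y} = vec.span {A0 *v x}"
      using g by (simp add: pgl_act_pgl_class)
    then obtain k where k: "A0 *v x = k *s y"
      using span_singleton_eq_imp_scale by blast
    then have k0: "k \<noteq> 0"
      using invertible_mult_vector_eq_0[OF A0(1)] x by force
    define A where "A = (\<chi> i j. (1/k) * A0$i$j)"
    have "pgl_class A = g"
      unfolding A_def using pgl_class_scale[of "1/k" A0] k0 A0(2) by simp
    moreover have "A *v x = y"
      unfolding A_def scale_matrix_mult_vector k using k0 by simp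
    moreover have "invertible A"
      unfolding invertible_iff_ker_trivial A_def scale_matrix_mult_vector
      using k0 invertible_mult_vector_eq_0[OF A0(1)] by simp
    ultimately show "g \<in> pgl_class ` ?M"
      using g fixed_point_free_pgl_class_iff by blast
  qed
  ultimately show ?thesis
    using card_image by fastforce
qed

lemma card_eigenvector_free_mapping_eq_e1_e2:
  fixes x y :: "'a::{finite,field}^3"
  assumes x: "x \<noteq> 0" and y: "y \<notin> vec.span {x}"
  shows "card {A. A *v x = y \<and> eigenvector_free A}
       = card {B::'a^3^3. B *v vector [1, 0, 0] = vector [0, 1, 0] \<and> eigenvector_free B}"
proof -
  obtain P :: "'a^3^3" where P: "invertible P" "P *v vector [1, 0, 0] = x" "P *v vector [0, 1, 0] = y"
    using obtain_invertible_mapping_e1_e2[OF x y] by blast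
  obtain Q where PQ: "P ** Q = mat 1" "Q ** P = mat 1"
    using P(1) unfolding invertible_def by blast
  have Qx: "Q *v x = vector [1, 0, 0]" and Qy: "Q *v y = vector [0, 1, 0]"
    using P(2,3) PQ(2) by (auto simp: matrix_vector_mul_assoc)
  let ?M = "{A. A *v x = y \<and> eigenvector_free A}"
  let ?M' = "{B::'a^3^3. B *v vector [1, 0, 0] = vector [0, 1, 0] \<and> eigenvector_free B}"
  have conj_cancel: "Q ** (P ** B ** Q) ** P = B" "P ** (Q ** A ** P) ** Q = A" for A B :: "'a^3^3"
  proof -
    have "Q ** (P ** B ** Q) ** P = (Q ** P) ** B ** (Q ** P)" "P ** (Q ** A ** P) ** Q = (P ** Q) ** A ** (P ** Q)"
      by (simp_all add: matrix_mul_assoc)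
    then show "Q ** (P ** B ** Q) ** P = B" "P ** (Q ** A ** P) ** Q = A"
      by (simp_all add: PQ matrix_mul_lid matrix_mul_rid)
  qed
  have "bij_betw (\<lambda>B. P ** B ** Q) ?M' ?M"
  proof (rule bij_betw_byWitness[where f' = "\<lambda>A. Q ** A ** P"])
    show "\<forall>B\<in>?M'. Q ** (P ** B ** Q) ** P = B" "\<forall>A\<in>?M. P ** (Q ** A ** P) ** Q = A"
      using conj_cancel by blast+
    show "(\<lambda>B. P ** B ** Q) ` ?M' \<subseteq> ?M"
      using eigenvector_free_similar[OF _ PQ] Qx P(3) by (auto simp flip: matrix_vector_mul_assoc)
    show "(\<lambda>A. Q ** A ** P) ` ?M \<subseteq> ?M'"
      using eigenvector_free_similar[OF _ PQ(2,1)] Qy P(2) by (auto simp flip: matrix_vector_mul_assoc)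
  qed
  then show ?thesis
    by (simp add: bij_betw_same_card)
qed

subsection \<open>Rootless monic cubics\<close>

definition cubic :: "'a::field \<times> 'a \<times> 'a \<Rightarrow> 'a \<Rightarrow> 'a" where
  "cubic c t = t^3 + snd (snd c) * t^2 + fst (snd c) * t + fst c"

lemma card_filter_eq_sum: "finite A \<Longrightarrow> card {x\<in>A. P x} = (\<Sum>x\<in>A. if P x then 1 else 0)"
  by (simp add: sum.If_cases Int_def)

lemma sum_card_filter_swap:
  "finite A \<Longrightarrow> finite B \<Longrightarrow> (\<Sum>a\<in>A. card {b\<in>B. P a b}) = (\<Sum>b\<in>B. card {a\<in>A. P a b})"
  by (simp add: card_filter_eq_sum sum.swap[of _ A B])

lemma card_distinct_pairs:
  "finite R \<Longrightarrow> card {(r, s). r \<in> R \<and> s \<in> R \<and> r \<noteq> s} = card R * (card R - 1)"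
proof -
  assume "finite R"
  moreover have "{(r, s). r \<in> R \<and> s \<in> R \<and> r \<noteq> s} = Sigma R (\<lambda>r. R - {r})"
    by auto
  ultimately show ?thesis
    by simp
qed

lemma card_distinct_triples:
  "finite R \<Longrightarrow> card {(r, s, t). r \<in> R \<and> s \<in> R \<and> t \<in> R \<and> r \<noteq> s \<and> r \<noteq> t \<and> s \<noteq> t}
     = card R * (card R - 1) * (card R - 2)"
proof -
  assume R: "finite R"
  have "{(r, s, t). r \<in> R \<and> s \<in> R \<and> t \<in> R \<and> r \<noteq> s \<and> r \<noteq> t \<and> s \<noteq> t}
      = Sigma R (\<lambda>r. Sigma (R - {r}) (\<lambda>s. R - {r, s}))"
    by auto
  also have "card \<dots> = (\<Sum>r\<in>R. \<Sum>s\<in>R - {r}. card (R - {r, s}))"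
    using R by simp
  also have "\<dots> = (\<Sum>r\<in>R. \<Sum>s\<in>R - {r}. card R - 2)"
    using R by (intro sum.cong refl) (auto simp: card_Diff_subset)
  finally show ?thesis
    using R by simp
qed

lemma card_cubic_roots_le: "card {t. cubic c t = 0} \<le> 3"
proof -
  have "cubic c = poly [:fst c, fst (snd c), snd (snd c), 1:]"
    by (simp add: fun_eq_iff cubic_def algebra_simps power2_eq_square power3_eq_cube)
  then show ?thesis
    using card_poly_roots_bound[of "[:fst c, fst (snd c), snd (snd c), 1:]"] by simp
qed

lemma cubic_eq_0_iff: "cubic c r = 0 \<longleftrightarrow> fst c = - (r^3 + snd (snd c) * r^2 + fst (snd c) * r)"
  by (auto simp: cubic_def algebra_simps eq_neg_iff_add_eq_0)

lemma cubic_diff: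
  "cubic c r - cubic c s = (r - s) * (r^2 + r * s + s^2 + snd (snd c) * (r + s) + fst (snd c))"
  by (simp add: cubic_def algebra_simps power2_eq_square power3_eq_cube)

lemma cubic_two_roots_coeff:
  assumes "cubic c r = 0" "cubic c s = 0" "r \<noteq> s"
  shows "fst (snd c) = - (r^2 + r * s + s^2) - snd (snd c) * (r + s)"
proof -
  have "(r - s) * (r^2 + r * s + s^2 + snd (snd c) * (r + s) + fst (snd c)) = 0"
    using assms(1,2) cubic_diff[of c r s] by simp
  then have "r^2 + r * s + s^2 + snd (snd c) * (r + s) + fst (snd c) = 0"
    using assms(3) by simp
  then show ?thesis
    by (simp add: eq_neg_iff_add_eq_0 algebra_simps)
qed

lemma card_cubics_with_root: "card {c::'a::{finite,field} \<times> 'a \<times> 'a. cubic c t = 0} = CARD('a)^2"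
proof -
  define f where "f = (\<lambda>(c1::'a, c2::'a). (- (t^3 + c2 * t^2 + c1 * t), c1, c2))"
  have "{c. cubic c t = 0} = range f"
    by (auto simp: f_def cubic_eq_0_iff image_iff)
  moreover have "inj f"
    by (auto simp: inj_def f_def)
  ultimately show ?thesis
    by (simp add: card_image power2_eq_square card_cartesian_product flip: UNIV_Times_UNIV)
qed

lemma card_cubics_with_two_roots:
  assumes "r \<noteq> s"
  shows "card {c::'a::{finite,field} \<times> 'a \<times> 'a. cubic c r = 0 \<and> cubic c s = 0} = CARD('a)"
proof -
  define g where "g = (\<lambda>c2::'a. - (r^2 + r * s + s^2) - c2 * (r + s))"
  define f where "f = (\<lambda>c2::'a. (- (r^3 + c2 * r^2 + g c2 * r), g c2, c2))"
  have "{c. cubic c r = 0 \<and> cubic c s = 0} = range f"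
  proof (intro set_eqI iffI)
    fix c assume "c \<in> {c. cubic c r = 0 \<and> cubic c s = 0}"
    then have "c = f (snd (snd c))"
      using cubic_two_roots_coeff[OF _ _ assms, of c] cubic_eq_0_iff[of c r]
      by (auto simp: f_def g_def prod_eq_iff)
    then show "c \<in> range f"
      by blast
  next
    fix c assume "c \<in> range f"
    then obtain c2 where c: "c = f c2"
      by blast
    have "cubic c r = 0"
      unfolding c by (simp add: f_def cubic_eq_0_iff)
    moreover have "cubic c r - cubic c s = 0"
      unfolding c cubic_diff by (simp add: f_def g_def)
    ultimately show "c \<in> {c. cubic c r = 0 \<and> cubic c s = 0}"
      by simp
  qed
  moreover have "inj f"
    by (auto simp: inj_def f_def)
  ultimately show ?thesis
    by (simp add: card_image)
qed

lemma cubics_with_three_roots: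
  assumes d: "r \<noteq> s" "r \<noteq> t" "s \<noteq> t"
  shows "{c::'a::field \<times> 'a \<times> 'a. cubic c r = 0 \<and> cubic c s = 0 \<and> cubic c t = 0}
       = {(- (r * s * t), r * s + r * t + s * t, - (r + s + t))}"
proof (intro set_eqI iffI)
  fix c :: "'a \<times> 'a \<times> 'a"
  assume "c \<in> {c. cubic c r = 0 \<and> cubic c s = 0 \<and> cubic c t = 0}"
  then have roots: "cubic c r = 0" "cubic c s = 0" "cubic c t = 0"
    by auto
  have rs: "fst (snd c) = - (r^2 + r * s + s^2) - snd (snd c) * (r + s)"
    and rt: "fst (snd c) = - (r^2 + r * t + t^2) - snd (snd c) * (r + t)"
    using cubic_two_roots_coeff roots d by blast+
  have "(s - t) * (r + s + t + snd (snd c)) = 0"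
    using rs rt by algebra
  then have "r + s + t + snd (snd c) = 0"
    using d(3) by simp
  then have c2: "snd (snd c) = - (r + s + t)"
    by algebra
  have c1: "fst (snd c) = r * s + r * t + s * t"
    using rs unfolding c2 by (simp add: algebra_simps power2_eq_square)
  have "fst c = - (r * s * t)"
    using roots(1) c1 c2 by (simp add: cubic_eq_0_iff algebra_simps power2_eq_square power3_eq_cube)
  with c1 c2 show "c \<in> {(- (r * s * t), r * s + r * t + s * t, - (r + s + t))}"
    by (simp add: prod_eq_iff)
next
  fix c assume "c \<in> {(- (r * s * t), r * s + r * t + s * t, - (r + s + t))}"
  then show "c \<in> {c. cubic c r = 0 \<and> cubic c s = 0 \<and> cubic c t = 0}"
    by (simp add: cubic_def algebra_simps power2_eq_square power3_eq_cube)
qed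

definition cubic_roots :: "'a::field \<times> 'a \<times> 'a \<Rightarrow> 'a set" where
  "cubic_roots c = {t. cubic c t = 0}"

lemma sum_card_cubic_roots:
  "(\<Sum>c\<in>(UNIV :: ('a::{finite,field} \<times> 'a \<times> 'a) set). card (cubic_roots c)) = CARD('a) * CARD('a)^2"
proof -
  have "(\<Sum>c\<in>UNIV. card (cubic_roots (c::'a \<times> 'a \<times> 'a))) = (\<Sum>c\<in>UNIV. card {t\<in>UNIV. cubic (c::'a \<times> 'a \<times> 'a) t = 0})"
    by (simp add: cubic_roots_def)
  also have "\<dots> = (\<Sum>t\<in>UNIV. card {c\<in>UNIV. cubic c (t::'a) = 0})"
    by (rule sum_card_filter_swap) auto
  finally show ?thesis
    by (simp add: card_cubics_with_root)
qed

lemma sum_card_cubic_root_pairs: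
  "(\<Sum>c\<in>(UNIV :: ('a::{finite,field} \<times> 'a \<times> 'a) set). card (cubic_roots c) * (card (cubic_roots c) - 1))
     = CARD('a) * (CARD('a) - 1) * CARD('a)"
proof -
  let ?D = "{(r, s). r \<in> (UNIV::'a set) \<and> s \<in> UNIV \<and> r \<noteq> s}"
  have "card (cubic_roots c) * (card (cubic_roots c) - 1)
      = card {p\<in>?D. cubic c (fst p) = 0 \<and> cubic c (snd p) = 0}" for c :: "'a \<times> 'a \<times> 'a"
  proof -
    have "{p\<in>?D. cubic c (fst p) = 0 \<and> cubic c (snd p) = 0}
        = {(r, s). r \<in> cubic_roots c \<and> s \<in> cubic_roots c \<and> r \<noteq> s}"
      by (auto simp: cubic_roots_def)
    then show ?thesis
      using card_distinct_pairs[of "cubic_roots c"] by simp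
  qed
  then have "(\<Sum>c\<in>UNIV. card (cubic_roots c) * (card (cubic_roots (c::'a \<times> 'a \<times> 'a)) - 1))
      = (\<Sum>c\<in>UNIV. card {p\<in>?D. cubic c (fst p) = 0 \<and> cubic c (snd p) = 0})"
    by simp
  also have "\<dots> = (\<Sum>p\<in>?D. card {c\<in>UNIV. cubic c (fst p) = 0 \<and> cubic c (snd p) = 0})"
    by (rule sum_card_filter_swap) auto
  also have "\<dots> = (\<Sum>p\<in>?D. CARD('a))"
    by (intro sum.cong refl) (auto simp: card_cubics_with_two_roots)
  finally show ?thesis
    using card_distinct_pairs[of "UNIV::'a set"] by simp
qed

lemma sum_card_cubic_root_triples:
  "(\<Sum>c\<in>(UNIV :: ('a::{finite,field} \<times> 'a \<times> 'a) set).
      card (cubic_roots c) * (card (cubic_roots c) - 1) * (card (cubic_roots c) - 2))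
     = CARD('a) * (CARD('a) - 1) * (CARD('a) - 2)"
proof -
  let ?D = "{(r, s, t). r \<in> (UNIV::'a set) \<and> s \<in> UNIV \<and> t \<in> UNIV \<and> r \<noteq> s \<and> r \<noteq> t \<and> s \<noteq> t}"
  let ?P = "\<lambda>c p. cubic c (fst p) = 0 \<and> cubic c (fst (snd p)) = 0 \<and> cubic c (snd (snd p)) = 0"
  have "card (cubic_roots c) * (card (cubic_roots c) - 1) * (card (cubic_roots c) - 2)
      = card {p\<in>?D. ?P c p}" for c :: "'a \<times> 'a \<times> 'a"
  proof -
    have "{p\<in>?D. ?P c p} = {(r, s, t). r \<in> cubic_roots c \<and> s \<in> cubic_roots c \<and> t \<in> cubic_roots c
                            \<and> r \<noteq> s \<and> r \<noteq> t \<and> s \<noteq> t}"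
      by (auto simp: cubic_roots_def)
    then show ?thesis
      using card_distinct_triples[of "cubic_roots c"] by simp
  qed
  then have "(\<Sum>c\<in>UNIV. card (cubic_roots c) * (card (cubic_roots c) - 1)
      * (card (cubic_roots (c::'a \<times> 'a \<times> 'a)) - 2))
      = (\<Sum>c\<in>UNIV. card {p\<in>?D. ?P c p})"
    by simp
  also have "\<dots> = (\<Sum>p\<in>?D. card {c\<in>UNIV. ?P c p})"
    by (rule sum_card_filter_swap) auto
  also have "\<dots> = (\<Sum>p\<in>?D. 1)"
    by (intro sum.cong refl) (auto simp: cubics_with_three_roots)
  finally show ?thesis
    using card_distinct_triples[of "UNIV::'a set"] by simp
qed

text \<open>Counting roots with the weights \<open>1, k, k(k-1), k(k-1)(k-2)\<close> of a cubic with
  \<open>k \<le> 3\<close> roots isolates the rootless ones.\<close>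

lemma root_count_weights:
  "(n::nat) \<le> 3 \<Longrightarrow> 6 * (if n = 0 then 1 else 0) + 6 * n + n * (n - 1) * (n - 2) = 6 + 3 * (n * (n - 1))"
proof -
  assume "n \<le> 3"
  then have "n = 0 \<or> n = 1 \<or> n = 2 \<or> n = 3"
    by auto
  then show ?thesis
    by auto
qed

theorem card_rootless_cubics:
  "3 * card {c::'a::{finite,field} \<times> 'a \<times> 'a. cubic_roots c = {}} = CARD('a)^3 - CARD('a)"
proof -
  let ?q = "CARD('a)"
  define k where "k c = card (cubic_roots c)" for c :: "'a \<times> 'a \<times> 'a"
  have "k c \<le> 3" for c
    unfolding k_def cubic_roots_def by (rule card_cubic_roots_le)
  then have "(\<Sum>c\<in>UNIV. 6 * (if k c = 0 then 1 else 0) + 6 * k c + k c * (k c - 1) * (k c - 2))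
      = (\<Sum>c\<in>UNIV. 6 + 3 * (k c * (k c - 1)))"
    by (intro sum.cong refl root_count_weights)
  then have "6 * (\<Sum>c\<in>UNIV. if k c = 0 then 1 else 0) + 6 * (\<Sum>c\<in>UNIV. k c)
      + (\<Sum>c\<in>UNIV. k c * (k c - 1) * (k c - 2)) = 6 * card (UNIV :: ('a \<times> 'a \<times> 'a) set)
      + 3 * (\<Sum>c\<in>UNIV. k c * (k c - 1))"
    by (simp add: sum.distrib sum_distrib_left)
  moreover have "(\<Sum>c\<in>UNIV. if k c = 0 then 1 else 0) = card {c::'a \<times> 'a \<times> 'a. cubic_roots c = {}}"
    by (simp add: card_filter_eq_sum[symmetric] k_def)
  moreover have "card (UNIV :: ('a \<times> 'a \<times> 'a) set) = ?q * (?q * ?q)"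
    by (simp add: card_cartesian_product flip: UNIV_Times_UNIV)
  ultimately have count: "6 * card {c::'a \<times> 'a \<times> 'a. cubic_roots c = {}} + 6 * (?q * ?q^2)
      + ?q * (?q - 1) * (?q - 2) = 6 * (?q * (?q * ?q)) + 3 * (?q * (?q - 1) * ?q)"
    using sum_card_cubic_roots[where 'a='a] sum_card_cubic_root_pairs[where 'a='a]
      sum_card_cubic_root_triples[where 'a='a]
    unfolding k_def by simp
  have "2 \<le> ?q"
    using card_mono[of "UNIV::'a set" "{0, 1}"] by simp
  then obtain m where m: "?q = m + 2"
    by (metis add.commute le_Suc_ex)
  show ?thesis
    using count unfolding m by (simp add: algebra_simps power2_eq_square power3_eq_cube)
qed

subsection \<open>Matrices mapping \<open>e\<^sub>1\<close> to \<open>e\<^sub>2\<close>\<close>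

definition e2_matrix :: "'a::field^3 \<Rightarrow> 'a^3 \<Rightarrow> 'a^3^3" where
  "e2_matrix u w = transpose (vector [vector [0, 1, 0], u, w])"

text \<open>\<open>cubic (charpoly_coeffs u w) t = det (t - e2_matrix u w)\<close>, the characteristic polynomial.\<close>

definition charpoly_coeffs :: "'a::field^3 \<Rightarrow> 'a^3 \<Rightarrow> 'a \<times> 'a \<times> 'a" where
  "charpoly_coeffs u w = (u$1 * w$3 - u$3 * w$1, u$2 * w$3 - u$3 * w$2 - u$1, - (u$2 + w$3))"

lemma e2_matrix_mult_vector:
  "e2_matrix u w *v z = z$1 *s vector [0, 1, 0] + z$2 *s u + z$3 *s w"
  unfolding e2_matrix_def by (rule columns_matrix_mult_vector)

lemma e2_matrix_eigen_iff:
  "e2_matrix u w *v z = \<mu> *s z \<longleftrightarrow>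
     u$1 * z$2 + w$1 * z$3 = \<mu> * z$1 \<and> z$1 + u$2 * z$2 + w$2 * z$3 = \<mu> * z$2
     \<and> u$3 * z$2 + w$3 * z$3 = \<mu> * z$3"
  unfolding e2_matrix_mult_vector vec_eq_iff forall_3 by (simp add: algebra_simps)

lemma e2_matrix_eigenvalue_is_root:
  assumes u3: "u$3 \<noteq> 0" and z: "z \<noteq> 0" and eig: "e2_matrix u w *v z = \<mu> *s z"
  shows "cubic (charpoly_coeffs u w) \<mu> = 0"
proof -
  have eq: "u$1 * z$2 + w$1 * z$3 = \<mu> * z$1" "z$1 + u$2 * z$2 + w$2 * z$3 = \<mu> * z$2"
    "u$3 * z$2 + w$3 * z$3 = \<mu> * z$3"
    using eig by (simp_all add: e2_matrix_eigen_iff)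
  have "z$3 \<noteq> 0"
    using z eq(2,3) u3 by (auto simp: vec_eq_iff forall_3)
  moreover have "z$3 * cubic (charpoly_coeffs u w) \<mu> = - (u$3 * (u$1 * z$2 + w$1 * z$3 - \<mu> * z$1))"
  proof -
    have "u$3 * z$1 = u$3 * (\<mu> * z$2 - u$2 * z$2 - w$2 * z$3)" "u$3 * z$2 = (\<mu> - w$3) * z$3"
      using eq(2,3) by algebra+
    then show ?thesis
      unfolding cubic_def charpoly_coeffs_def
      by (simp add: algebra_simps power2_eq_square power3_eq_cube) algebra
  qed
  ultimately show ?thesis
    using eq(1) by simp
qed

lemma vector3_eq_0_iff: "vector [a, b, c] = (0::'a::zero^3) \<longleftrightarrow> a = 0 \<and> b = 0 \<and> c = 0"
  by (simp add: vec_eq_iff forall_3)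

lemma not_eigenvector_free_e2_matrix_if_u3_zero:
  assumes u3: "u$3 = 0"
  shows "\<not> eigenvector_free (e2_matrix u w)"
proof -
  have "\<exists>z \<mu>. z \<noteq> 0 \<and> e2_matrix u w *v z = \<mu> *s z"
  proof (cases "w$3^2 - u$2 * w$3 - u$1 = 0")
    case True
    then show ?thesis
      using u3 by (intro exI[of _ "vector [w$3 - u$2, 1, 0]"] exI[of _ "w$3"])
        (simp add: e2_matrix_eigen_iff vector3_eq_0_iff algebra_simps power2_eq_square)
  next
    case False
    define d where "d = w$3^2 - u$2 * w$3 - u$1"
    define z1 where "z1 = (u$1 * w$2 - w$1 * (u$2 - w$3)) / d"
    define z2 where "z2 = (w$3 * w$2 + w$1) / d"
    have d: "d \<noteq> 0"
      using False d_def by simp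
    have "d * z1 = u$1 * w$2 - w$1 * (u$2 - w$3)" "d * z2 = w$3 * w$2 + w$1"
      using d unfolding z1_def z2_def by simp_all
    then have "d * (u$1 * z2 + w$1 - w$3 * z1) = 0" "d * (z1 + u$2 * z2 + w$2 - w$3 * z2) = 0"
      unfolding d_def by algebra+
    then have "u$1 * z2 + w$1 = w$3 * z1" "z1 + u$2 * z2 + w$2 = w$3 * z2"
      using d by simp_all
    then show ?thesis
      using u3 by (intro exI[of _ "vector [z1, z2, 1]"] exI[of _ "w$3"])
        (simp add: e2_matrix_eigen_iff vector3_eq_0_iff)
  qed
  then show ?thesis
    unfolding eigenvector_free_def by blast
qed

lemma not_eigenvector_free_e2_matrix_if_root:
  assumes u3: "u$3 \<noteq> 0" and root: "cubic (charpoly_coeffs u w) t = 0"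
  shows "\<not> eigenvector_free (e2_matrix u w)"
proof -
  have "u$1 * (t - w$3) + w$1 * u$3 = t * (- (u$2 - t) * (t - w$3) - w$2 * u$3)"
    using root unfolding cubic_def charpoly_coeffs_def
    by (simp add: algebra_simps power2_eq_square power3_eq_cube)
  then have "e2_matrix u w *v vector [- (u$2 - t) * (t - w$3) - w$2 * u$3, t - w$3, u$3]
      = t *s vector [- (u$2 - t) * (t - w$3) - w$2 * u$3, t - w$3, u$3]"
    by (simp add: e2_matrix_eigen_iff algebra_simps)
  then show ?thesis
    using u3 unfolding eigenvector_free_def by (metis vector3_eq_0_iff vector_3(3))
qed

lemma eigenvector_free_e2_matrix_iff:
  "eigenvector_free (e2_matrix u w) \<longleftrightarrow> u$3 \<noteq> 0 \<and> (\<forall>t. cubic (charpoly_coeffs u w) t \<noteq> 0)"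
proof
  assume ef: "eigenvector_free (e2_matrix u w)"
  then show "u$3 \<noteq> 0 \<and> (\<forall>t. cubic (charpoly_coeffs u w) t \<noteq> 0)"
    using not_eigenvector_free_e2_matrix_if_u3_zero not_eigenvector_free_e2_matrix_if_root by blast
next
  assume "u$3 \<noteq> 0 \<and> (\<forall>t. cubic (charpoly_coeffs u w) t \<noteq> 0)"
  then show "eigenvector_free (e2_matrix u w)"
    unfolding eigenvector_free_def using e2_matrix_eigenvalue_is_root by blast
qed

lemma card_vectors_third_nonzero:
  "card {u::'a::{finite,field}^3. u$3 \<noteq> 0} = CARD('a) * CARD('a) * (CARD('a) - 1)"
proof -
  define f where "f = (\<lambda>(a::'a, b::'a, c::'a). vector [a, b, c] :: 'a^3)"
  have "{u::'a^3. u$3 \<noteq> 0} = f ` (UNIV \<times> UNIV \<times> (UNIV - {0}))"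
  proof (intro set_eqI iffI)
    fix u :: "'a^3" assume "u \<in> {u. u$3 \<noteq> 0}"
    moreover have "u = f (u$1, u$2, u$3)"
      by (simp add: f_def vec_eq_iff forall_3)
    ultimately show "u \<in> f ` (UNIV \<times> UNIV \<times> (UNIV - {0}))"
      by blast
  qed (auto simp: f_def)
  moreover have "inj f"
    by (auto simp: inj_def f_def vec_eq_iff forall_3)
  ultimately show ?thesis
    by (simp add: card_image inj_on_subset card_cartesian_product card_Diff_singleton)
qed

lemma bij_charpoly_coeffs:
  assumes u3: "u$3 \<noteq> 0"
  shows "bij (charpoly_coeffs u)"
proof (rule bijI)
  show "inj (charpoly_coeffs u)"
  proof (rule injI)
    fix w w' assume eq: "charpoly_coeffs u w = charpoly_coeffs u w'"
    then have 3: "w$3 = w'$3"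
      by (simp add: charpoly_coeffs_def)
    then have "u$3 * w$2 = u$3 * w'$2" "u$3 * w$1 = u$3 * w'$1"
      using eq by (simp_all add: charpoly_coeffs_def)
    then show "w = w'"
      using u3 3 by (simp add: vec_eq_iff forall_3)
  qed
  show "surj (charpoly_coeffs u)"
  proof (rule surjI)
    fix c :: "'a \<times> 'a \<times> 'a"
    define w3 where "w3 = - snd (snd c) - u$2"
    show "charpoly_coeffs u (vector [(u$1 * w3 - fst c) / u$3, (u$2 * w3 - u$1 - fst (snd c)) / u$3, w3]) = c"
      using u3 unfolding charpoly_coeffs_def w3_def by (simp add: prod_eq_iff)
  qed
qed

lemma image_filter: "{y \<in> range f. P y} = f ` {x. P (f x)}"
  by auto

lemma range_e2_matrix:
  "range (\<lambda>(u, w). e2_matrix u w) = {B::'a::field^3^3. B *v vector [1, 0, 0] = vector [0, 1, 0]}"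
proof (intro set_eqI iffI)
  fix B :: "'a^3^3" assume "B \<in> {B. B *v vector [1, 0, 0] = vector [0, 1, 0]}"
  then have "B = e2_matrix (\<chi> i. B$i$2) (\<chi> i. B$i$3)"
    by (auto simp: e2_matrix_def vec_eq_iff forall_3 matrix_vector_mult_def sum_3 transpose_def)
  then show "B \<in> range (\<lambda>(u, w). e2_matrix u w)"
    using rangeI[of "\<lambda>(u, w). e2_matrix u w" "(\<chi> i. B$i$2, \<chi> i. B$i$3)"] by simp
qed (auto simp: e2_matrix_mult_vector)

lemma inj_e2_matrix: "inj (\<lambda>(u, w). e2_matrix u w)"
  by (auto simp: inj_def e2_matrix_def vec_eq_iff forall_3 transpose_def)

lemma card_e1_e2_eigenvector_free:
  "card {B::'a::{finite,field}^3^3. B *v vector [1, 0, 0] = vector [0, 1, 0] \<and> eigenvector_free B}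
     = CARD('a) * CARD('a) * (CARD('a) - 1) * card {c::'a \<times> 'a \<times> 'a. cubic_roots c = {}}"
proof -
  let ?E = "\<lambda>(u, w). e2_matrix u w :: 'a^3^3"
  have "{B::'a^3^3. B *v vector [1, 0, 0] = vector [0, 1, 0] \<and> eigenvector_free B}
      = {B::'a^3^3. B *v vector [1, 0, 0] = vector [0, 1, 0]} \<inter> {B. eigenvector_free B}"
    by (rule Collect_conj_eq)
  also have "\<dots> = {B \<in> range ?E. eigenvector_free B}"
    unfolding range_e2_matrix by blast
  also have "\<dots> = ?E ` {p. eigenvector_free (?E p)}"
    by (rule image_filter)
  finally have "card {B::'a^3^3. B *v vector [1, 0, 0] = vector [0, 1, 0] \<and> eigenvector_free B}
      = card (?E ` {p. eigenvector_free (?E p)})"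
    by (rule arg_cong[where f = card])
  also have "\<dots> = card {p. eigenvector_free (?E p)}"
    using inj_e2_matrix by (rule card_image[OF inj_on_subset[OF _ subset_UNIV]])
  also have "{p. eigenvector_free (?E p)}
      = Sigma {u. u$3 \<noteq> 0} (\<lambda>u. charpoly_coeffs u -` {c. cubic_roots c = {}})"
    by (auto simp: eigenvector_free_e2_matrix_iff cubic_roots_def)
  also have "card \<dots> = (\<Sum>u\<in>{u::'a^3. u$3 \<noteq> 0}. card (charpoly_coeffs u -` {c. cubic_roots c = {}}))"
    by (rule card_SigmaI) simp_all
  also have "\<dots> = (\<Sum>u\<in>{u::'a^3. u$3 \<noteq> 0}. card {c::'a \<times> 'a \<times> 'a. cubic_roots c = {}})"
    by (intro sum.cong refl card_vimage_inj) (auto dest: bij_charpoly_coeffs simp: bij_is_inj bij_is_surj)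
  finally show ?thesis
    by (simp add: card_vectors_third_nonzero)
qed

subsection \<open>Counting along a line\<close>

lemma card_fixed_point_free_mapping:
  fixes a b :: "('a::{finite,field}^3) set"
  assumes a: "a \<in> pg_points" and b: "b \<in> pg_points" and ab: "a \<noteq> b"
  shows "3 * card {g\<in>PGL3. pgl_act g a = b \<and> fixed_point_free g}
       = CARD('a) * CARD('a) * (CARD('a) - 1) * (CARD('a)^3 - CARD('a))"
proof -
  obtain x y :: "'a^3" where x: "x \<noteq> 0" "a = vec.span {x}" and y: "y \<noteq> 0" "b = vec.span {y}"
    using a b pg_points_iff by metis
  have y_x: "y \<notin> vec.span {x}"
  proof
    assume "y \<in> vec.span {x}"
    then obtain k where "y = k *s x" and "k \<noteq> 0"
      using y(1) unfolding vec.span_singleton by auto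
    then show False
      using ab x(2) y(2) span_singleton_scale by metis
  qed
  have "card {g\<in>PGL3. pgl_act g a = b \<and> fixed_point_free g} = card {A. A *v x = y \<and> eigenvector_free A}"
    unfolding x(2) y(2) by (rule card_fixed_point_free_mapping_eq_matrices[OF x(1) y(1)])
  also have "\<dots> = card {B::'a^3^3. B *v vector [1, 0, 0] = vector [0, 1, 0] \<and> eigenvector_free B}"
    by (rule card_eigenvector_free_mapping_eq_e1_e2[OF x(1) y_x])
  finally show ?thesis
    using card_rootless_cubics[where 'a='a] by (simp add: card_e1_e2_eigenvector_free)
qed

lemma fixed_point_free_maps_unique_line_point:
  fixes l :: "('a::{finite,field}^3) set set"
  assumes l: "l \<in> pg_lines" and g: "g \<in> PGL3" "fixed_point_free g"
  shows "card {c\<in>l. pgl_act g c \<in> l} = 1"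
proof -
  obtain W where W: "vec.subspace W" "vec.dim W = 2" and l_def: "l = {p\<in>pg_points. p \<subseteq> W}"
    using l unfolding pg_lines_def by blast
  obtain A where A: "invertible A" "g = pgl_class A"
    using g(1) unfolding PGL3_def by blast
  then have "eigenvector_free A"
    using g(2) fixed_point_free_pgl_class_iff by blast
  then obtain z where z: "z \<noteq> 0" "{x\<in>W. A *v x \<in> W} = vec.span {z}"
    using eigenvector_free_plane_inter_preimage[OF W A(1)] by blast
  have point_in_W: "vec.span {x} \<subseteq> W \<longleftrightarrow> x \<in> W" for x
    using W(1) by (metis vec.span_base vec.span_minimal singletonI singletonD subsetD subsetI)
  have "{c\<in>l. pgl_act g c \<in> l} = {vec.span {z}}"
  proof (intro set_eqI iffI)
    fix c assume "c \<in> {c\<in>l. pgl_act g c \<in> l}"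
    then obtain x where x: "x \<noteq> 0" "c = vec.span {x}" "x \<in> W" "A *v x \<in> W"
      unfolding l_def A(2) pg_points_iff by (auto simp: pgl_act_pgl_class point_in_W)
    then obtain k where "x = k *s z" "k \<noteq> 0"
      using z(2) unfolding vec.span_singleton by fastforce
    then show "c \<in> {vec.span {z}}"
      using x(2) span_singleton_scale by simp
  next
    fix c assume "c \<in> {vec.span {z}}"
    moreover have "z \<in> W" "A *v z \<in> W" "A *v z \<noteq> 0"
      using z vec.span_base[of z "{z}"] invertible_mult_vector_eq_0[OF A(1)] by auto
    ultimately show "c \<in> {c\<in>l. pgl_act g c \<in> l}"
      unfolding l_def A(2) pg_points_iff using z(1) by (auto simp: pgl_act_pgl_class point_in_W)
  qed
  then show ?thesis
    by simp
qed

text \<open>Swapping the sums over \<open>(c, d) \<in> l \<times> l\<close> and over \<open>g\<close>, each fixed-point-free \<open>g\<close> with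
  \<open>a\<^sup>g = b\<close> is counted once for every \<open>c \<in> l\<close> with \<open>c\<^sup>g \<in> l\<close>, that is, exactly once.\<close>

lemma Nop_e_line_eq_card:
  fixes l :: "('a::{finite,field}^3) set set"
  assumes l: "l \<in> pg_lines" and a: "a \<in> pg_points" and b: "b \<in> pg_points"
  shows "Nop (e_line l) (a, b) = of_nat (card {g\<in>PGL3. pgl_act g a = b \<and> fixed_point_free g})"
proof -
  define S where "S = {g\<in>PGL3. pgl_act g a = b \<and> fixed_point_free g}"
  have l_points: "l \<subseteq> pg_points"
    using l unfolding pg_lines_def by blast
  have fin: "finite l" "finite S"
    by simp_all
  have "Nop (e_line l) (a, b)
      = (\<Sum>cd\<in>pg_points \<times> pg_points. if cd \<in> l \<times> l then of_nat (Nmat (a, b) cd) else 0)"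
    unfolding Nop_def e_line_def by (intro sum.cong refl) (auto simp: mem_Times_iff)
  also have "\<dots> = (\<Sum>cd\<in>l \<times> l. of_nat (Nmat (a, b) cd))"
    using l_points by (simp add: Int_absorb1 Sigma_mono flip: sum.inter_restrict)
  also have "\<dots> = of_nat (\<Sum>cd\<in>l \<times> l. Nmat (a, b) cd)"
    by simp
  also have "(\<Sum>cd\<in>l \<times> l. Nmat (a, b) cd) = (\<Sum>c\<in>l. \<Sum>d\<in>l. card {g\<in>S. pgl_act g c = d})"
    unfolding Nmat_def S_def sum.cartesian_product
    by (auto intro!: sum.cong arg_cong[where f = card])
  also have "\<dots> = (\<Sum>c\<in>l. \<Sum>g\<in>S. card {d\<in>l. pgl_act g c = d})"
    using fin by (simp add: sum_card_filter_swap)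
  also have "\<dots> = (\<Sum>g\<in>S. \<Sum>c\<in>l. if pgl_act g c \<in> l then 1 else 0)"
    unfolding card_filter_eq_sum[OF fin(1)] using fin(1) by (subst sum.swap) (simp add: sum.delta')
  also have "\<dots> = (\<Sum>g\<in>S. card {c\<in>l. pgl_act g c \<in> l})"
    by (simp add: card_filter_eq_sum[OF fin(1)])
  also have "\<dots> = card S"
    using fixed_point_free_maps_unique_line_point[OF l] by (simp add: S_def)
  finally show ?thesis
    unfolding S_def by simp
qed

lemma no_fixed_point_free_mapping_to_self:
  "a \<in> pg_points \<Longrightarrow> {g\<in>PGL3. pgl_act g a = a \<and> fixed_point_free g} = {}"
  unfolding fixed_point_free_def by blast

lemma of_nat_eq_q2_v:
  fixes n q :: nat
  assumes "3 * n = q * q * (q - 1) * (q^3 - q)" and "1 \<le> q"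
  shows "(of_nat n :: complex) = of_nat q ^ 2 * ((of_nat q - 1) * of_nat q * (of_nat q ^ 2 - 1) / 3)"
proof -
  have "q \<le> q^3"
    using assms(2) by (simp add: power3_eq_cube)
  have "3 * (of_nat n :: complex) = of_nat (q * q * (q - 1) * (q^3 - q))"
    using arg_cong[OF assms(1), of of_nat] by simp
  also have "\<dots> = of_nat q * of_nat q * (of_nat q - 1) * (of_nat q ^ 3 - of_nat q)"
    using assms(2) \<open>q \<le> q^3\<close> by (simp add: of_nat_diff)
  finally have "3 * (of_nat n :: complex) = of_nat q * of_nat q * (of_nat q - 1) * (of_nat q ^ 3 - of_nat q)" .
  then show ?thesis
    by (simp add: field_simps power2_eq_square power3_eq_cube)
qed

theorem mainTheorem10:
  fixes l :: "('a::{finite,field} ^ 3) set set"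
  assumes "l \<in> pg_lines"
  shows "\<forall>ab \<in> pg_points \<times> pg_points.
           Nop (e_line l) ab =
             (let q = (of_nat CARD('a) :: complex); v = (q - 1) * q * (q^2 - 1) / 3
              in q^2 * v * e_all ab)"
proof (intro ballI, clarify)
  fix a b :: "('a^3) set"
  assume a: "a \<in> pg_points" and b: "b \<in> pg_points"
  have "Nop (e_line l) (a, b) = of_nat (card {g\<in>PGL3. pgl_act g a = b \<and> fixed_point_free g})"
    by (rule Nop_e_line_eq_card[OF assms a b])
  moreover have "(of_nat (card {g\<in>PGL3. pgl_act g a = b \<and> fixed_point_free g}) :: complex)
      = of_nat CARD('a) ^ 2 * ((of_nat CARD('a) - 1) * of_nat CARD('a) * (of_nat CARD('a) ^ 2 - 1) / 3)"
    if "a \<noteq> b"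
    using card_fixed_point_free_mapping[OF a b that] by (rule of_nat_eq_q2_v) (simp add: Suc_leI)
  ultimately show "Nop (e_line l) (a, b) = (let q = (of_nat CARD('a) :: complex);
      v = (q - 1) * q * (q^2 - 1) / 3 in q^2 * v * e_all (a, b))"
    using a b no_fixed_point_free_mapping_to_self[OF a] by (cases "a = b") (simp_all add: e_all_def Let_def)
qed

end
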